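(* Let $0<q<1/2$, $p=1-q$, and for integers $z\ge1$ let $$P(z)=1-\sum_{k=0}^{z-1}\left(p^zq^k-q^zp^k\right)\binom{k+z-1}{k},\qquad P_{SN}(z)=1-\sum_{k=0}^{z-1}e^{-zq/p}\frac{(zq/p)^k}{k!}\left(1-\left(\frac qp\right)^{z-k}\right).$$ Then as $z\to+\infty$, $P_{SN}(z)\prec P(z)$, i.e. $P_{SN}(z)/P(z)\to0$.
   Context: $P(z)$ is the exact probability of success of a double-spend attack after $z$ confirmations, $P_{SN}(z)$ is Nakamoto's approximation. *)

theory Defs
  imports Complex_Main
begin

text \<open>Exact success probability of a double-spend attack after z confirmations,
  with attacker hash share q and honest share p = 1 - q.\<close>
definition P_exact :: "real \<Rightarrow> nat \<Rightarrow> real" where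
  "P_exact q z = (let p = 1 - q in
     1 - (\<Sum>k<z. (p ^ z * q ^ k - q ^ z * p ^ k) * real ((k + z - 1) choose k)))"

definition P_SN :: "real \<Rightarrow> nat \<Rightarrow> real" where
  "P_SN q z = (let p = 1 - q; lam = real z * q / p in
     1 - (\<Sum>k<z. exp (- lam) * lam ^ k / fact k * (1 - (q / p) ^ (z - k))))"

end

theory Submission
  imports Defs "HOL-Analysis.Generalised_Binomial_Theorem"
begin

text \<open>
  Let p = 1 - q and s = q / p < 1. In P(z) the part 1 - p^z \<Sum>k<z. C(k+z-1,k) q^k is a tail of
  the negative binomial series of (1 - q)^-z, hence nonnegative, so P(z) is at least the single
  term q^z p^(z-1) C(2z-2,z-1) \<ge> (4pq)^z / (8p(z-1)).
  Nakamoto's P_SN(z) is a Poisson tail at \<lambda> = zs plus a remainder; the tail of the exponential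
  series at zs is at most s^z times its tail at z, whence P_SN(z) \<le> (s e^(1-s))^z.
  Finally s e^(1-s) < 4pq is equivalent to e^u (1 - u) < 1 for u = (1 - s)/2 > 0, so the ratio
  is O(z r^z) with r < 1.
\<close>

lemma negative_binomial_sums:
  fixes q :: real
  assumes "\<bar>q\<bar> < 1" and "z > 0"
  shows "(\<lambda>k. real ((k + z - 1) choose k) * q ^ k) sums (1 / (1 - q) ^ z)"
proof -
  have coeff: "((- real z) gchoose k) * (-q) ^ k = real ((k + z - 1) choose k) * q ^ k" for k
  proof -
    have "real z + real k - 1 = real (k + z - 1)"
      using \<open>z > 0\<close> by (simp add: of_nat_diff)
    then have "(- real z) gchoose k = (-1) ^ k * real ((k + z - 1) choose k)"
      by (simp only: gbinomial_minus binomial_gbinomial)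
    moreover have "(-1 :: real) ^ k * (-1) ^ k = 1"
      by (simp flip: power_mult_distrib)
    ultimately show ?thesis
      by (simp only: power_minus[of q] mult_ac) simp
  qed
  have "(\<lambda>k. ((- real z) gchoose k) * (-q) ^ k) sums (1 + (-q)) powr (- real z)"
    by (rule gen_binomial_real) (use assms in simp)
  moreover have "(1 + (-q)) powr (- real z) = 1 / (1 - q) ^ z"
    using assms(1) by (simp add: powr_minus powr_realpow divide_inverse)
  ultimately show ?thesis
    by (simp only: coeff)
qed

lemma negative_binomial_partial_sum_le:
  fixes q :: real
  assumes "0 \<le> q" and "q < 1" and "z > 0"
  shows "(1 - q) ^ z * (\<Sum>k<n. real ((k + z - 1) choose k) * q ^ k) \<le> 1"
proof -
  have S: "(\<lambda>k. real ((k + z - 1) choose k) * q ^ k) sums (1 / (1 - q) ^ z)"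
    using negative_binomial_sums assms by simp
  have "(\<Sum>k<n. real ((k + z - 1) choose k) * q ^ k) \<le> 1 / (1 - q) ^ z"
    unfolding sums_unique[OF S] by (rule sum_le_suminf[OF sums_summable[OF S]]) (use assms in auto)
  then have "(1 - q) ^ z * (\<Sum>k<n. real ((k + z - 1) choose k) * q ^ k) \<le> (1 - q) ^ z * (1 / (1 - q) ^ z)"
    using assms by (intro mult_left_mono) simp_all
  then show ?thesis
    using assms by simp
qed

lemma exp_real_sums: "(\<lambda>n. x ^ n / fact n) sums exp (x :: real)"
  using exp_converges[of x] by (simp add: divide_inverse mult.commute)

lemma exp_partial_sum_le: "0 \<le> x \<Longrightarrow> (\<Sum>k<n. x ^ k / fact k) \<le> exp (x :: real)"
  using sum_le_suminf[OF sums_summable[OF exp_real_sums]] sums_unique[OF exp_real_sums[of x]]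
  by simp

lemma exp_tail_scale_le:
  fixes s x :: real
  assumes "0 \<le> s" and "s \<le> 1" and "0 \<le> x"
  shows "exp (s * x) - (\<Sum>k<n. (s * x) ^ k / fact k) \<le> s ^ n * (exp x - (\<Sum>k<n. x ^ k / fact k))"
proof -
  have "(s * x) ^ (i + n) / fact (i + n) \<le> s ^ n * (x ^ (i + n) / fact (i + n))" for i
  proof -
    have "s ^ (i + n) \<le> s ^ n"
      using assms by (simp add: power_add mult_left_le_one_le power_le_one)
    then show ?thesis
      using assms by (simp add: power_mult_distrib divide_right_mono mult_right_mono)
  qed
  moreover have "(\<lambda>i. (s * x) ^ (i + n) / fact (i + n))
      sums (exp (s * x) - (\<Sum>k<n. (s * x) ^ k / fact k))"
    by (rule sums_split_initial_segment[OF exp_real_sums])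
  moreover have "(\<lambda>i. s ^ n * (x ^ (i + n) / fact (i + n)))
      sums (s ^ n * (exp x - (\<Sum>k<n. x ^ k / fact k)))"
    by (rule sums_mult[OF sums_split_initial_segment[OF exp_real_sums]])
  ultimately show ?thesis by (rule sums_le)
qed

lemma add_one_less_exp:
  fixes x :: real
  assumes "x \<noteq> 0"
  shows "1 + x < exp x"
proof (cases "1 + x / 2 \<ge> 0")
  case True
  have "0 < x * x"
    using assms by (metis not_real_square_gt_zero)
  then have "1 + x < (1 + x / 2) ^ 2"
    by (simp add: power2_eq_square algebra_simps)
  also have "\<dots> \<le> exp (x / 2) ^ 2"
    using True by (intro power_mono) simp_all
  also have "\<dots> = exp x"
    by (simp add: power2_eq_square flip: exp_add)
  finally show ?thesis .
next
  case False
  then have "1 + x < 0" by simp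
  then show ?thesis using exp_gt_zero[of x] by linarith
qed

lemma P_exact_lower_bound:
  fixes q :: real
  assumes "0 < q" and "q < 1" and "z \<ge> 2"
  shows "(4 * (1 - q) * q) ^ z / (8 * (1 - q) * real (z - 1)) \<le> P_exact q z"
proof -
  define p where "p = 1 - q"
  have "p > 0" using \<open>q < 1\<close> by (simp add: p_def)
  have split: "P_exact q z = (1 - p ^ z * (\<Sum>k<z. real ((k + z - 1) choose k) * q ^ k))
      + (\<Sum>k<z. q ^ z * p ^ k * real ((k + z - 1) choose k))"
    unfolding P_exact_def Let_def p_def[symmetric]
    unfolding left_diff_distrib sum_subtractf sum_distrib_left by (simp add: mult_ac)
  have "0 \<le> 1 - p ^ z * (\<Sum>k<z. real ((k + z - 1) choose k) * q ^ k)"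
    using negative_binomial_partial_sum_le[of q z z] assms by (simp add: p_def)
  moreover have "q ^ z * p ^ (z - 1) * real ((2 * (z - 1)) choose (z - 1))
      \<le> (\<Sum>k<z. q ^ z * p ^ k * real ((k + z - 1) choose k))"
    using member_le_sum[of "z - 1" "{..<z}" "\<lambda>k. q ^ z * p ^ k * real ((k + z - 1) choose k)"]
      assms \<open>p > 0\<close> by (simp add: mult_2)
  moreover have "q ^ z * p ^ (z - 1) * (4 ^ (z - 1) / (2 * real (z - 1)))
      \<le> q ^ z * p ^ (z - 1) * real ((2 * (z - 1)) choose (z - 1))"
    using central_binomial_lower_bound[of "z - 1"] assms \<open>p > 0\<close> by (intro mult_left_mono) simp_all
  moreover have "q ^ z * p ^ (z - 1) * (4 ^ (z - 1) / (2 * real (z - 1)))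
      = (4 * p * q) ^ z / (8 * p * real (z - 1))"
  proof -
    obtain m where "z = Suc m" using assms by (cases z) auto
    then show ?thesis using \<open>p > 0\<close> by (simp add: field_simps power_mult_distrib)
  qed
  ultimately show ?thesis unfolding split p_def by linarith
qed

lemma P_exact_pos:
  fixes q :: real
  assumes "0 < q" and "q < 1" and "z \<ge> 2"
  shows "0 < P_exact q z"
proof -
  have "0 < (4 * (1 - q) * q) ^ z / (8 * (1 - q) * real (z - 1))"
    using assms by simp
  also have "\<dots> \<le> P_exact q z"
    by (rule P_exact_lower_bound[OF assms])
  finally show ?thesis .
qed

lemma P_SN_eq:
  fixes q :: real
  defines "s \<equiv> q / (1 - q)"
  shows "P_SN q z = exp (- (s * z)) * (exp (s * z) - (\<Sum>k<z. (s * z) ^ k / fact k))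
    + exp (- (s * z)) * s ^ z * (\<Sum>k<z. real z ^ k / fact k)"
proof -
  define L where "L = s * real z"
  have summand: "exp (- L) * L ^ k / fact k * (1 - s ^ (z - k))
      = exp (- L) * (L ^ k / fact k) - exp (- L) * s ^ z * (real z ^ k / fact k)" if "k < z" for k
  proof -
    have "L ^ k * s ^ (z - k) = real z ^ k * s ^ z"
      using that by (simp add: L_def power_mult_distrib mult_ac flip: power_add)
    then show ?thesis by (simp add: field_simps)
  qed
  have "real z * q / (1 - q) = L" and "q / (1 - q) = s"
    by (simp_all add: L_def s_def)
  then have "P_SN q z = 1 - (\<Sum>k<z. exp (- L) * L ^ k / fact k * (1 - s ^ (z - k)))"
    unfolding P_SN_def Let_def by simp
  also have "\<dots> = 1 - (\<Sum>k<z. exp (- L) * (L ^ k / fact k) - exp (- L) * s ^ z * (real z ^ k / fact k))"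
    using summand by (intro arg_cong[where f = "\<lambda>x. 1 - x"] sum.cong) simp_all
  also have "\<dots> = 1 - (exp (- L) * (\<Sum>k<z. L ^ k / fact k)
      - exp (- L) * s ^ z * (\<Sum>k<z. real z ^ k / fact k))"
    by (simp add: sum_subtractf sum_distrib_left)
  finally show ?thesis
    by (simp add: L_def algebra_simps exp_minus_inverse)
qed

lemma P_SN_nonneg:
  fixes q :: real
  assumes "0 \<le> q" and "q < 1"
  shows "0 \<le> P_SN q z"
proof -
  define s where "s = q / (1 - q)"
  have "0 \<le> s" using assms by (simp add: s_def)
  then have "(\<Sum>k<z. (s * z) ^ k / fact k) \<le> exp (s * z)"
    by (simp add: exp_partial_sum_le)
  then show ?thesis
    using \<open>0 \<le> s\<close> by (simp add: P_SN_eq s_def[symmetric] sum_nonneg)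
qed

lemma P_SN_le:
  fixes q :: real
  assumes "0 \<le> q" and "q \<le> 1/2"
  defines "s \<equiv> q / (1 - q)"
  shows "P_SN q z \<le> (s * exp (1 - s)) ^ z"
proof -
  have "0 \<le> s" and "s \<le> 1" using assms by (simp_all add: s_def)
  have "P_SN q z \<le> exp (- (s * z)) * (s ^ z * (exp z - (\<Sum>k<z. real z ^ k / fact k)))
      + exp (- (s * z)) * s ^ z * (\<Sum>k<z. real z ^ k / fact k)"
    unfolding P_SN_eq s_def[symmetric]
    using exp_tail_scale_le[OF \<open>0 \<le> s\<close> \<open>s \<le> 1\<close>, of "real z" z] by simp
  also have "\<dots> = s ^ z * exp (real z * (1 - s))"
    by (simp add: algebra_simps flip: exp_add)
  also have "\<dots> = (s * exp (1 - s)) ^ z"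
    by (simp add: power_mult_distrib exp_of_nat_mult)
  finally show ?thesis .
qed

lemma P_SN_rate_less_P_exact_rate:
  fixes q :: real
  assumes "0 < q" and "q < 1/2"
  defines "s \<equiv> q / (1 - q)"
  shows "s * exp (1 - s) < 4 * (1 - q) * q"
proof -
  define u where "u = (1 - s) / 2"
  have "0 < s" and "s < 1" using assms by (simp_all add: s_def field_simps)
  have inverse: "(1 - u) * (2 * (1 - q)) = 1"
    using assms by (simp add: u_def s_def field_simps)
  have "exp u * (1 - u) < 1"
  proof -
    have "1 - u < exp (- u)"
      using add_one_less_exp[of "- u"] \<open>s < 1\<close> by (simp add: u_def)
    then have "exp u * (1 - u) < exp u * exp (- u)"
      by (rule mult_strict_left_mono) simp
    then show ?thesis by (simp flip: exp_add)
  qed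
  then have "exp u * (1 - u) * (2 * (1 - q)) < 2 * (1 - q)"
    using assms by simp
  then have "exp u < 2 * (1 - q)"
    by (simp only: mult.assoc inverse mult_1_right)
  then have "exp u * exp u < (2 * (1 - q)) ^ 2"
    unfolding power2_eq_square using assms by (intro mult_strict_mono) simp_all
  then have "exp (1 - s) < (2 * (1 - q)) ^ 2"
    by (simp add: u_def flip: exp_add)
  then have "s * exp (1 - s) < s * (2 * (1 - q)) ^ 2"
    using \<open>0 < s\<close> by simp
  also have "\<dots> = 4 * (1 - q) * q"
    using assms by (simp add: s_def power2_eq_square field_simps)
  finally show ?thesis .
qed

lemma P_SN_div_P_exact_le:
  fixes q :: real
  assumes "0 < q" and "q < 1/2" and "z \<ge> 2"
  defines "s \<equiv> q / (1 - q)"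
  defines "r \<equiv> s * exp (1 - s) / (4 * (1 - q) * q)"
  shows "P_SN q z / P_exact q z \<le> 8 * (1 - q) * (real z * r ^ z)"
proof -
  define K where "K = (4 * (1 - q) * q) ^ z"
  have "0 < K" and "0 \<le> r" and "0 < real (z - 1)"
    using assms by (simp_all add: K_def)
  have "K * r ^ z = (s * exp (1 - s)) ^ z"
    unfolding r_def power_divide K_def[symmetric] using \<open>0 < K\<close> by simp
  then have "P_SN q z \<le> K * r ^ z"
    using P_SN_le[of q z, folded s_def] assms by simp
  moreover have "K / (8 * (1 - q) * real (z - 1)) \<le> P_exact q z"
    using P_exact_lower_bound[of q z] assms by (simp add: K_def)
  ultimately have "P_SN q z / P_exact q z \<le> (K * r ^ z) / (K / (8 * (1 - q) * real (z - 1)))"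
    using \<open>0 < K\<close> \<open>0 \<le> r\<close> \<open>0 < real (z - 1)\<close> assms by (intro frac_le) simp_all
  also have "\<dots> = 8 * (1 - q) * (real (z - 1) * r ^ z)"
    using \<open>0 < K\<close> by simp
  also have "\<dots> \<le> 8 * (1 - q) * (real z * r ^ z)"
    using \<open>0 \<le> r\<close> assms by (intro mult_left_mono mult_right_mono) simp_all
  finally show ?thesis .
qed

theorem mainTheorem10:
  fixes q :: real
  assumes "0 < q" and "q < 1/2"
  shows "((\<lambda>z. P_SN q z / P_exact q z) \<longlongrightarrow> 0) sequentially"
proof -
  define s where "s = q / (1 - q)"
  define r where "r = s * exp (1 - s) / (4 * (1 - q) * q)"
  have "0 < s" and "0 < 4 * (1 - q) * q"
    using assms by (simp_all add: s_def)
  then have "0 < r" and "r < 1"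
    using P_SN_rate_less_P_exact_rate[OF assms, folded s_def] by (simp_all add: r_def)
  have "eventually (\<lambda>z. 0 \<le> P_SN q z / P_exact q z) sequentially"
    unfolding eventually_sequentially
  proof (intro exI[of _ 2] allI impI)
    fix z :: nat
    assume "2 \<le> z"
    then show "0 \<le> P_SN q z / P_exact q z"
      using assms by (intro divide_nonneg_pos P_SN_nonneg P_exact_pos) simp_all
  qed
  moreover have "eventually (\<lambda>z. P_SN q z / P_exact q z \<le> 8 * (1 - q) * (real z * r ^ z)) sequentially"
    using P_SN_div_P_exact_le[OF assms] unfolding r_def s_def eventually_sequentially by blast
  moreover have "(\<lambda>z. 8 * (1 - q) * (real z * r ^ z)) \<longlonglongrightarrow> 0"
    using \<open>0 < r\<close> \<open>r < 1\<close> tendsto_mult[OF tendsto_const powser_times_n_limit_0[of r]] by simp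
  ultimately show ?thesis
    by (rule tendsto_sandwich[OF _ _ tendsto_const])
qed

end
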